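(* Let $U\subseteq V$, let $H=(U,E(U))$ be the induced subgraph with inherited edge weights, and let $f\in\ell^2(V,w)$ be nonnegative with $f(v)=0$ for all $v\notin U$ and $\sum_{v\in U}w_H(v)f(v)^2>0$. Suppose that for every $t>0$, $$w\big(E(V_f(t),V\setminus U)\big)\le w\big(E(V_f(t),U\setminus V_f(t))\big).$$ Then $\sqrt{8\,\mathcal R_H(f)}\ge\mathcal R_G(f)$.
   Context: $G=(V,E,w)$ finite undirected, positive edge weights, $w(v)=\sum_{u\sim v}w(u,v)\ge1$. $E(U)$ is the set of edges with both endpoints in $U$; $w_H(v)=\sum_{u\in U,\{u,v\}\in E}w(u,v)$ for $v\in U$. For disjoint $S,T$, $w(E(S,T))$ is the total weight of edges with one endpoint in $S$ and the other in $T$. $V_f(t)=\{v:f(v)\ge t\}$. $\mathcal R_G(f)=\sum_{\{u,v\}\in E}w(u,v)(f(u)-f(v))^2/\sum_{v\in V}w(v)f(v)^2$ and $\mathcal R_H(f)=\sum_{\{u,v\}\in E(U)}w(u,v)(f(u)-f(v))^2/\sum_{v\in U}w_H(v)f(v)^2$. *)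

theory Defs
  imports "HOL-Analysis.Analysis"
begin

definition wgraph :: "'a set \<Rightarrow> ('a \<Rightarrow> 'a \<Rightarrow> real) \<Rightarrow> bool" where
  "wgraph V w \<longleftrightarrow> finite V \<and> (\<forall>u v. w u v = w v u) \<and> (\<forall>u v. w u v \<ge> 0)
     \<and> (\<forall>u. w u u = 0) \<and> (\<forall>u v. w u v \<noteq> 0 \<longrightarrow> u \<in> V \<and> v \<in> V)"

definition edges_in :: "('a \<Rightarrow> 'a \<Rightarrow> real) \<Rightarrow> 'a set \<Rightarrow> 'a set set" where
  "edges_in w U = {{u, v} | u v. u \<in> U \<and> v \<in> U \<and> u \<noteq> v \<and> w u v > 0}"

definition edge_weight :: "('a \<Rightarrow> 'a \<Rightarrow> real) \<Rightarrow> 'a set \<Rightarrow> real" where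
  "edge_weight w e = (THE c. \<exists>u v. e = {u, v} \<and> c = w u v)"

text \<open>Weighted degree w(v) in G, and degree w_H(v) in the induced subgraph on U.\<close>
definition wdeg :: "'a set \<Rightarrow> ('a \<Rightarrow> 'a \<Rightarrow> real) \<Rightarrow> 'a \<Rightarrow> real" where
  "wdeg V w v = (\<Sum>u\<in>V. w u v)"

definition cut_weight :: "('a \<Rightarrow> 'a \<Rightarrow> real) \<Rightarrow> 'a set \<Rightarrow> 'a set \<Rightarrow> real" where
  "cut_weight w S T = (\<Sum>u\<in>S. \<Sum>v\<in>T. w u v)"

definition superlevel :: "'a set \<Rightarrow> ('a \<Rightarrow> real) \<Rightarrow> real \<Rightarrow> 'a set" where
  "superlevel V f t = {v \<in> V. f v \<ge> t}"

text \<open>Rayleigh quotient of f on the subgraph induced by U (U = V gives R_G).\<close>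
definition rayleigh :: "'a set \<Rightarrow> ('a \<Rightarrow> 'a \<Rightarrow> real) \<Rightarrow> ('a \<Rightarrow> real) \<Rightarrow> real" where
  "rayleigh U w f =
     (\<Sum>e\<in>edges_in w U. edge_weight w e * (f (SOME u. u \<in> e) - f (SOME v. v \<in> e \<and> v \<noteq> (SOME u. u \<in> e)))\<^sup>2)
     / (\<Sum>v\<in>U. wdeg U w v * (f v)\<^sup>2)"

end

theory Submission
  imports Defs
begin

text \<open>Let \<open>D(U)\<close> be the sum of \<open>w u v * (f u - f v)\<^sup>2\<close> over ordered pairs in \<open>U\<close> (twice the
  numerator of \<open>R_H\<close>) and \<open>N(U)\<close> the denominator of \<open>R_H\<close>. Since \<open>f\<close> vanishes off \<open>U\<close>,
  \<open>D(V) = D(U) + 2 B\<close>, where \<open>B\<close> sums \<open>w u x * (f u)\<^sup>2\<close> over \<open>u \<in> U\<close>, \<open>x \<in> V - U\<close>, and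
  \<open>N(V) \<ge> N(U)\<close>. Integrating the hypothesis over the level sets of \<open>f\<^sup>2\<close> bounds \<open>B\<close> by the sum of
  \<open>w u v * max 0 ((f u)\<^sup>2 - (f v)\<^sup>2)\<close> over \<open>U\<close>, which Cauchy--Schwarz bounds by
  \<open>sqrt (D(U) * N(U))\<close>. With \<open>r = sqrt (D(U) / N(U)) \<le> 2\<close> this gives
  \<open>R_G \<le> r\<^sup>2 / 2 + r \<le> 2 r = sqrt (8 R_H)\<close>.\<close>

definition dirichlet_sum :: "('a \<Rightarrow> 'a \<Rightarrow> real) \<Rightarrow> 'a set \<Rightarrow> ('a \<Rightarrow> real) \<Rightarrow> real" where
  "dirichlet_sum w U f = (\<Sum>u\<in>U. \<Sum>v\<in>U. w u v * (f u - f v)\<^sup>2)"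

definition degree_sqnorm :: "('a \<Rightarrow> 'a \<Rightarrow> real) \<Rightarrow> 'a set \<Rightarrow> ('a \<Rightarrow> real) \<Rightarrow> real" where
  "degree_sqnorm w U f = (\<Sum>v\<in>U. wdeg U w v * (f v)\<^sup>2)"

lemma edge_weight_doubleton:
  assumes "\<forall>u v. w u v = w v u"
  shows "edge_weight w {u, v} = w u v"
  unfolding edge_weight_def
proof (rule the_equality)
  fix c assume "\<exists>x y. {u, v} = {x, y} \<and> c = w x y"
  then show "c = w u v" using assms by (auto simp: doubleton_eq_iff)
qed blast

lemma some_doubleton_diff_sq:
  fixes f :: "'a \<Rightarrow> real"
  assumes "u \<noteq> v"
  shows "(f (SOME x. x \<in> {u, v}) - f (SOME y. y \<in> {u, v} \<and> y \<noteq> (SOME x. x \<in> {u, v})))\<^sup>2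
    = (f u - f v)\<^sup>2"
proof -
  define a where "a = (SOME x. x \<in> {u, v})"
  have a: "a \<in> {u, v}" unfolding a_def by (rule someI) blast
  define b where "b = (SOME y. y \<in> {u, v} \<and> y \<noteq> a)"
  have b: "b \<in> {u, v} \<and> b \<noteq> a" unfolding b_def by (rule someI_ex) (use a assms in auto)
  from a b have "{a, b} = {u, v}" by auto
  then have "(f a - f b)\<^sup>2 = (f u - f v)\<^sup>2"
    by (auto simp: doubleton_eq_iff power2_commute)
  then show ?thesis unfolding a_def b_def .
qed

text \<open>Each edge \<open>{u,v}\<close> is counted twice in the double sum, as \<open>(u,v)\<close> and \<open>(v,u)\<close>.\<close>
lemma edge_sum_eq_half_dirichlet_sum:
  assumes "finite U" "\<forall>u v. w u v = w v u" "\<forall>u v. w u v \<ge> 0"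
  shows "(\<Sum>e\<in>edges_in w U. edge_weight w e *
            (f (SOME u. u \<in> e) - f (SOME v. v \<in> e \<and> v \<noteq> (SOME u. u \<in> e)))\<^sup>2)
       = dirichlet_sum w U f / 2"
proof -
  define h where "h e = edge_weight w e *
    (f (SOME u. u \<in> e) - f (SOME v. v \<in> e \<and> v \<noteq> (SOME u. u \<in> e)))\<^sup>2" for e
  define F where "F p = w (fst p) (snd p) * (f (fst p) - f (snd p))\<^sup>2" for p
  define P where "P = {p \<in> U \<times> U. fst p \<noteq> snd p \<and> w (fst p) (snd p) > 0}"
  define g where "g p = {fst p, snd p}" for p :: "'a \<times> 'a"
  have "dirichlet_sum w U f = (\<Sum>p\<in>U \<times> U. F p)"
    by (simp add: dirichlet_sum_def sum.cartesian_product F_def case_prod_beta)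
  also have "\<dots> = (\<Sum>p\<in>P. F p)"
    using assms(1,3) by (intro sum.mono_neutral_right)
      (auto simp: P_def F_def not_less intro: antisym)
  also have "\<dots> = (\<Sum>e\<in>g ` P. \<Sum>p\<in>{x \<in> P. g x = e}. F p)"
    using assms(1) by (intro sum.image_gen) (simp add: P_def)
  also have "\<dots> = (\<Sum>e\<in>g ` P. 2 * h e)"
  proof (rule sum.cong[OF refl])
    fix e assume "e \<in> g ` P"
    then obtain u v where uv: "(u, v) \<in> P" "e = {u, v}" unfolding g_def by auto
    then have "u \<noteq> v" "(v, u) \<in> P" using assms(2) unfolding P_def by auto
    moreover have "{x \<in> P. g x = e} = {(u, v), (v, u)}"
      using uv \<open>(v, u) \<in> P\<close> unfolding g_def P_def by (auto simp: doubleton_eq_iff)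
    moreover have "h e = w u v * (f u - f v)\<^sup>2"
      unfolding h_def uv(2) edge_weight_doubleton[OF assms(2)] some_doubleton_diff_sq[OF \<open>u \<noteq> v\<close>] ..
    ultimately show "(\<Sum>p\<in>{x \<in> P. g x = e}. F p) = 2 * h e"
      using assms(2) by (simp add: F_def power2_commute)
  qed
  also have "g ` P = edges_in w U"
    unfolding edges_in_def P_def g_def by (auto simp: image_iff) blast+
  finally show ?thesis by (simp add: h_def sum_distrib_left[symmetric])
qed

lemma rayleigh_eq_dirichlet_sum:
  assumes "finite U" "\<forall>u v. w u v = w v u" "\<forall>u v. w u v \<ge> 0"
  shows "rayleigh U w f = dirichlet_sum w U f / (2 * degree_sqnorm w U f)"
  unfolding rayleigh_def edge_sum_eq_half_dirichlet_sum[OF assms] degree_sqnorm_def by simp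

lemma degree_sqnorm_eq_double_sum:
  "degree_sqnorm w U f = (\<Sum>u\<in>U. \<Sum>v\<in>U. w u v * (f v)\<^sup>2)"
  unfolding degree_sqnorm_def wdeg_def by (subst sum.swap) (simp add: sum_distrib_right)

lemma double_sum_sq_le_degree_sqnorm:
  assumes "\<forall>u v. w u v = w v u" "\<forall>u v. w u v \<ge> 0"
    and "\<And>u v. (g u v)\<^sup>2 \<le> 2 * (f u)\<^sup>2 + 2 * (f v)\<^sup>2"
  shows "(\<Sum>u\<in>U. \<Sum>v\<in>U. w u v * (g u v)\<^sup>2) \<le> 4 * degree_sqnorm w U f"
proof -
  have "(\<Sum>u\<in>U. \<Sum>v\<in>U. w u v * (g u v)\<^sup>2)
      \<le> (\<Sum>u\<in>U. \<Sum>v\<in>U. w u v * (2 * (f u)\<^sup>2 + 2 * (f v)\<^sup>2))"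
    using assms(2,3) by (intro sum_mono mult_left_mono) auto
  also have "\<dots> = 2 * (\<Sum>u\<in>U. \<Sum>v\<in>U. w v u * (f u)\<^sup>2)
                 + 2 * (\<Sum>u\<in>U. \<Sum>v\<in>U. w u v * (f v)\<^sup>2)"
    using assms(1) by (simp add: sum_distrib_left sum.distrib algebra_simps)
  also have "(\<Sum>u\<in>U. \<Sum>v\<in>U. w v u * (f u)\<^sup>2) = (\<Sum>u\<in>U. \<Sum>v\<in>U. w u v * (f v)\<^sup>2)"
    by (rule sum.swap)
  finally show ?thesis by (simp add: degree_sqnorm_eq_double_sum)
qed

lemma dirichlet_sum_le_degree_sqnorm:
  assumes "\<forall>u v. w u v = w v u" "\<forall>u v. w u v \<ge> 0"
  shows "dirichlet_sum w U f \<le> 4 * degree_sqnorm w U f"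
  unfolding dirichlet_sum_def
proof (rule double_sum_sq_le_degree_sqnorm[OF assms])
  fix u v show "(f u - f v)\<^sup>2 \<le> 2 * (f u)\<^sup>2 + 2 * (f v)\<^sup>2"
    using sum_squares_ge_zero[of "f u + f v" 0] by (simp add: power2_eq_square algebra_simps)
qed

lemma weighted_Cauchy_Schwarz:
  fixes c a b :: "'i \<Rightarrow> real"
  assumes "\<And>i. i \<in> I \<Longrightarrow> c i \<ge> 0"
  shows "(\<Sum>i\<in>I. c i * a i * b i)\<^sup>2 \<le> (\<Sum>i\<in>I. c i * (a i)\<^sup>2) * (\<Sum>i\<in>I. c i * (b i)\<^sup>2)"
proof -
  have "(\<Sum>i\<in>I. c i * a i * b i) = (\<Sum>i\<in>I. (sqrt (c i) * a i) * (sqrt (c i) * b i))"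
    "(\<Sum>i\<in>I. c i * (a i)\<^sup>2) = (\<Sum>i\<in>I. (sqrt (c i) * a i)\<^sup>2)"
    "(\<Sum>i\<in>I. c i * (b i)\<^sup>2) = (\<Sum>i\<in>I. (sqrt (c i) * b i)\<^sup>2)"
    using assms by (auto intro!: sum.cong simp: power_mult_distrib algebra_simps)
  then show ?thesis
    using Cauchy_Schwarz_ineq_sum[of "\<lambda>i. sqrt (c i) * a i" "\<lambda>i. sqrt (c i) * b i" I] by simp
qed

text \<open>\<open>|f u\<^sup>2 - f v\<^sup>2| = |f u - f v| |f u + f v|\<close> and Cauchy--Schwarz.\<close>
lemma sum_sq_gap_le_sqrt:
  assumes "finite U" "\<forall>u v. w u v = w v u" "\<forall>u v. w u v \<ge> 0"
  shows "(\<Sum>u\<in>U. \<Sum>v\<in>U. w u v * max 0 ((f u)\<^sup>2 - (f v)\<^sup>2))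
    \<le> sqrt (dirichlet_sum w U f * degree_sqnorm w U f)"
proof -
  define A where "A = (\<Sum>u\<in>U. \<Sum>v\<in>U. w u v * max 0 ((f u)\<^sup>2 - (f v)\<^sup>2))"
  define W where "W p = w (fst p) (snd p)" for p
  have "A = (\<Sum>u\<in>U. \<Sum>v\<in>U. w u v * max 0 ((f v)\<^sup>2 - (f u)\<^sup>2))"
    unfolding A_def using assms(2) by (subst sum.swap) simp
  then have "2 * A = (\<Sum>u\<in>U. \<Sum>v\<in>U. w u v * (max 0 ((f u)\<^sup>2 - (f v)\<^sup>2) + max 0 ((f v)\<^sup>2 - (f u)\<^sup>2)))"
    unfolding A_def by (simp add: sum.distrib distrib_left)
  also have "\<dots> = (\<Sum>u\<in>U. \<Sum>v\<in>U. w u v * \<bar>(f u)\<^sup>2 - (f v)\<^sup>2\<bar>)"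
    by (intro sum.cong refl) (auto simp: max_def)
  also have "\<dots> = (\<Sum>p\<in>U \<times> U. W p * \<bar>f (fst p) - f (snd p)\<bar> * \<bar>f (fst p) + f (snd p)\<bar>)"
    by (simp add: sum.cartesian_product W_def case_prod_beta abs_mult[symmetric]
        power2_eq_square algebra_simps)
  finally have "(2 * A)\<^sup>2 \<le> (\<Sum>p\<in>U \<times> U. W p * \<bar>f (fst p) - f (snd p)\<bar>\<^sup>2)
                          * (\<Sum>p\<in>U \<times> U. W p * \<bar>f (fst p) + f (snd p)\<bar>\<^sup>2)"
    using assms(3) by (simp only:) (rule weighted_Cauchy_Schwarz, simp add: W_def)
  also have "\<dots> = dirichlet_sum w U f * (\<Sum>u\<in>U. \<Sum>v\<in>U. w u v * (f u + f v)\<^sup>2)"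
    by (simp add: dirichlet_sum_def sum.cartesian_product W_def case_prod_beta)
  also have "\<dots> \<le> dirichlet_sum w U f * (4 * degree_sqnorm w U f)"
  proof (rule mult_left_mono)
    show "(\<Sum>u\<in>U. \<Sum>v\<in>U. w u v * (f u + f v)\<^sup>2) \<le> 4 * degree_sqnorm w U f"
    proof (rule double_sum_sq_le_degree_sqnorm[OF assms(2,3)])
      fix u v show "(f u + f v)\<^sup>2 \<le> 2 * (f u)\<^sup>2 + 2 * (f v)\<^sup>2"
        using sum_squares_ge_zero[of "f u - f v" 0] by (simp add: power2_eq_square algebra_simps)
    qed
    show "0 \<le> dirichlet_sum w U f"
      unfolding dirichlet_sum_def using assms(3) by (intro sum_nonneg) auto
  qed
  finally have "A\<^sup>2 \<le> dirichlet_sum w U f * degree_sqnorm w U f"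
    by (simp add: power_mult_distrib)
  then show ?thesis unfolding A_def by (rule real_le_rsqrt)
qed

section \<open>The level-set condition via the layer-cake principle\<close>

lemma sum_interval_lengths_mono:
  fixes c lo hi :: "'i \<Rightarrow> real" and d lo' hi' :: "'j \<Rightarrow> real"
  assumes "finite I" "finite J"
    and "\<And>s. (\<Sum>i\<in>I. c i * indicator {lo i<..hi i} s) \<le> (\<Sum>j\<in>J. d j * indicator {lo' j<..hi' j} s)"
  shows "(\<Sum>i\<in>I. c i * max 0 (hi i - lo i)) \<le> (\<Sum>j\<in>J. d j * max 0 (hi' j - lo' j))"
proof -
  have integrable: "integrable lborel (indicator {a<..b} :: real \<Rightarrow> real)" for a b :: real
    by (cases "a \<le> b") (auto intro: integrable_real_indicator)
  have length: "measure lborel {a<..b} = max 0 (b - a)" for a b :: real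
    by (cases "a \<le> b") auto
  have "(\<Sum>i\<in>I. c i * max 0 (hi i - lo i)) = (LINT s|lborel. (\<Sum>i\<in>I. c i * indicator {lo i<..hi i} s))"
    by (subst Bochner_Integration.integral_sum) (auto simp: integrable length)
  also have "\<dots> \<le> (LINT s|lborel. (\<Sum>j\<in>J. d j * indicator {lo' j<..hi' j} s))"
    by (rule Bochner_Integration.integral_mono) (auto simp: integrable assms(3))
  also have "\<dots> = (\<Sum>j\<in>J. d j * max 0 (hi' j - lo' j))"
    by (subst Bochner_Integration.integral_sum) (auto simp: integrable length)
  finally show ?thesis .
qed

lemma cut_weight_eq_restricted_sum:
  assumes "finite U" "S \<subseteq> U"
  shows "cut_weight w S T = (\<Sum>u\<in>U. \<Sum>v\<in>T. of_bool (u \<in> S) * w u v)"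
proof -
  have "cut_weight w S T = (\<Sum>u\<in>U \<inter> S. \<Sum>v\<in>T. w u v)"
    unfolding cut_weight_def using assms(2) by (simp add: Int_absorb1)
  then show ?thesis using assms(1) by (simp add: sum.inter_restrict sum_distrib_left[symmetric])
qed

text \<open>Writing \<open>s = t\<^sup>2\<close>, the level-set hypothesis at \<open>t\<close> compares the integrands; integrating
  over \<open>s > 0\<close> turns the boundary weight into the left side and the pairwise gaps of \<open>f\<^sup>2\<close> into
  the right side (a discrete co-area formula).\<close>
lemma boundary_le_sum_sq_gap:
  assumes "finite V" "U \<subseteq> V" "\<forall>u v. w u v \<ge> 0"
    and "\<forall>v. f v \<ge> 0" "\<forall>v. v \<notin> U \<longrightarrow> f v = 0"
    and "\<forall>t>0. cut_weight w (superlevel V f t) (V - U)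
                \<le> cut_weight w (superlevel V f t) (U - superlevel V f t)"
  shows "(\<Sum>u\<in>U. \<Sum>x\<in>V - U. w u x * (f u)\<^sup>2)
    \<le> (\<Sum>u\<in>U. \<Sum>v\<in>U. w u v * max 0 ((f u)\<^sup>2 - (f v)\<^sup>2))"
proof -
  have finU: "finite U" using assms(1,2) finite_subset by blast
  have "(\<Sum>p\<in>U \<times> (V - U). w (fst p) (snd p) * max 0 ((f (fst p))\<^sup>2 - 0))
      \<le> (\<Sum>p\<in>U \<times> U. w (fst p) (snd p) * max 0 ((f (fst p))\<^sup>2 - (f (snd p))\<^sup>2))"
  proof (rule sum_interval_lengths_mono)
    fix s :: real
    show "(\<Sum>p\<in>U \<times> (V - U). w (fst p) (snd p) * indicator {0<..(f (fst p))\<^sup>2} s)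
       \<le> (\<Sum>p\<in>U \<times> U. w (fst p) (snd p) * indicator {(f (snd p))\<^sup>2<..(f (fst p))\<^sup>2} s)"
    proof (cases "s > 0")
      case False
      then show ?thesis
        using assms(3) by (auto simp: indicator_def intro!: sum_nonneg)
    next
      case True
      define S where "S = superlevel V f (sqrt s)"
      have mem: "u \<in> S \<longleftrightarrow> s \<le> (f u)\<^sup>2" if "u \<in> U" for u
        using that assms(2,4) real_sqrt_le_iff[of s "(f u)\<^sup>2"] by (auto simp: S_def superlevel_def)
      have "S \<subseteq> U"
        using True assms(5) by (auto simp: S_def superlevel_def)
      have "(\<Sum>p\<in>U \<times> (V - U). w (fst p) (snd p) * indicator {0<..(f (fst p))\<^sup>2} s)
          = cut_weight w S (V - U)"
        using True mem by (auto simp: cut_weight_eq_restricted_sum[OF finU \<open>S \<subseteq> U\<close>]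
            sum.cartesian_product indicator_def intro!: sum.cong)
      also have "\<dots> \<le> cut_weight w S (U - S)"
        using assms(6) True unfolding S_def by simp
      also have "\<dots> = (\<Sum>u\<in>U. \<Sum>v\<in>U. of_bool (u \<in> S \<and> v \<notin> S) * w u v)"
        using finU by (auto simp: cut_weight_eq_restricted_sum[OF finU \<open>S \<subseteq> U\<close>] Diff_eq
            sum.inter_restrict intro!: sum.cong)
      also have "\<dots> = (\<Sum>p\<in>U \<times> U. w (fst p) (snd p) * indicator {(f (snd p))\<^sup>2<..(f (fst p))\<^sup>2} s)"
        using mem by (auto simp: sum.cartesian_product indicator_def intro!: sum.cong)
      finally show ?thesis .
    qed
  qed (use finU assms(1) in auto)
  then show ?thesis
    by (simp add: sum.cartesian_product case_prod_beta max_def)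
qed

lemma dirichlet_sum_extend_by_zero:
  assumes "finite V" "U \<subseteq> V" "\<forall>u v. w u v = w v u" "\<forall>v. v \<notin> U \<longrightarrow> f v = 0"
  shows "dirichlet_sum w V f = dirichlet_sum w U f + 2 * (\<Sum>u\<in>U. \<Sum>x\<in>V - U. w u x * (f u)\<^sup>2)"
proof -
  define g where "g u v = w u v * (f u - f v)\<^sup>2" for u v
  have split: "(\<Sum>x\<in>V. h x) = (\<Sum>x\<in>U. h x) + (\<Sum>x\<in>V - U. h x)" for h :: "'a \<Rightarrow> real"
    using sum.subset_diff[OF assms(2,1), of h] by linarith
  have outer: "(\<Sum>u\<in>U. \<Sum>x\<in>V - U. g u x) = (\<Sum>u\<in>U. \<Sum>x\<in>V - U. w u x * (f u)\<^sup>2)"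
    using assms(4) by (intro sum.cong refl) (simp add: g_def)
  have "(\<Sum>x\<in>V - U. \<Sum>u\<in>U. g x u) = (\<Sum>u\<in>U. \<Sum>x\<in>V - U. g u x)"
    using assms(3) by (subst sum.swap) (simp add: g_def power2_commute)
  moreover have "(\<Sum>x\<in>V - U. \<Sum>y\<in>V - U. g x y) = 0"
    using assms(4) by (simp add: g_def)
  ultimately show ?thesis
    unfolding dirichlet_sum_def g_def[symmetric] split sum.distrib outer[symmetric] by simp
qed

lemma degree_sqnorm_mono:
  assumes "finite V" "U \<subseteq> V" "\<forall>u v. w u v \<ge> 0" "\<forall>v. v \<notin> U \<longrightarrow> f v = 0"
  shows "degree_sqnorm w U f \<le> degree_sqnorm w V f"
proof -
  have "degree_sqnorm w U f \<le> (\<Sum>v\<in>U. wdeg V w v * (f v)\<^sup>2)"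
    unfolding degree_sqnorm_def wdeg_def
    using assms by (intro sum_mono mult_right_mono sum_mono2) auto
  also have "\<dots> = degree_sqnorm w V f"
    unfolding degree_sqnorm_def using assms by (intro sum.mono_neutral_left) auto
  finally show ?thesis .
qed

lemma rayleigh_comparison_arith:
  fixes D N N' B :: real
  assumes "0 \<le> D" "0 < N" "N \<le> N'" "0 \<le> B" "B \<le> sqrt (D * N)" "D \<le> 4 * N"
  shows "(D + 2 * B) / (2 * N') \<le> sqrt (8 * (D / (2 * N)))"
proof -
  define r where "r = sqrt (D / N)"
  have "r * r = D / N"
    using assms(1,2) by (simp add: r_def)
  have "r \<le> 2"
    using assms(2,6) real_sqrt_le_mono[of "D / N" 4] by (simp add: r_def pos_divide_le_eq)
  have "sqrt (D * N) = r * N"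
  proof -
    have "sqrt (D * N) = sqrt (D / N * (N * N))" using assms(2) by simp
    also have "\<dots> = r * N" unfolding real_sqrt_mult r_def using assms(2) by simp
    finally show ?thesis .
  qed
  then have "B / N \<le> r"
    using assms(2,5) by (simp add: pos_divide_le_eq)
  have "(D + 2 * B) / (2 * N') \<le> (D + 2 * B) / (2 * N)"
    using assms by (intro divide_left_mono) auto
  also have "\<dots> = r * r / 2 + B / N"
    using assms(2) \<open>r * r = D / N\<close> by (simp add: field_simps)
  also have "\<dots> \<le> 2 * r"
  proof -
    have "r * r \<le> 2 * r" using \<open>r \<le> 2\<close> using assms(1,2) by (intro mult_right_mono) (simp_all add: r_def)
    then show ?thesis using \<open>B / N \<le> r\<close> by linarith
  qed
  also have "2 * r = sqrt (8 * (D / (2 * N)))"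
  proof -
    have "8 * (D / (2 * N)) = 2\<^sup>2 * (D / N)" by simp
    then show ?thesis by (simp only: real_sqrt_mult r_def) simp
  qed
  finally show ?thesis .
qed

theorem mainTheorem10:
  fixes V U :: "'a set" and w :: "'a \<Rightarrow> 'a \<Rightarrow> real" and f :: "'a \<Rightarrow> real"
  assumes "wgraph V w"
    and "\<forall>v\<in>V. wdeg V w v \<ge> 1"
    and "U \<subseteq> V"
    and "\<forall>v. f v \<ge> 0"
    and "\<forall>v. v \<notin> U \<longrightarrow> f v = 0"
    and "(\<Sum>v\<in>U. wdeg U w v * (f v)\<^sup>2) > 0"
    and "\<forall>t>0. cut_weight w (superlevel V f t) (V - U)
                \<le> cut_weight w (superlevel V f t) (U - superlevel V f t)"
  shows "sqrt (8 * rayleigh U w f) \<ge> rayleigh V w f"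
proof -
  have finV: "finite V" and sym: "\<forall>u v. w u v = w v u" and nn: "\<forall>u v. w u v \<ge> 0"
    using assms(1) unfolding wgraph_def by auto
  have finU: "finite U" using finV assms(3) finite_subset by blast
  define B where "B = (\<Sum>u\<in>U. \<Sum>x\<in>V - U. w u x * (f u)\<^sup>2)"
  have "rayleigh V w f = (dirichlet_sum w U f + 2 * B) / (2 * degree_sqnorm w V f)"
    using rayleigh_eq_dirichlet_sum[OF finV sym nn] dirichlet_sum_extend_by_zero[OF finV assms(3) sym assms(5)]
    by (simp add: B_def)
  also have "\<dots> \<le> sqrt (8 * (dirichlet_sum w U f / (2 * degree_sqnorm w U f)))"
  proof (rule rayleigh_comparison_arith)
    show "0 \<le> dirichlet_sum w U f" "0 \<le> B"
      unfolding dirichlet_sum_def B_def using nn by (auto intro!: sum_nonneg)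
    show "0 < degree_sqnorm w U f"
      using assms(6) by (simp add: degree_sqnorm_def)
    show "degree_sqnorm w U f \<le> degree_sqnorm w V f"
      by (rule degree_sqnorm_mono[OF finV assms(3) nn assms(5)])
    show "B \<le> sqrt (dirichlet_sum w U f * degree_sqnorm w U f)"
      using boundary_le_sum_sq_gap[OF finV assms(3) nn assms(4,5,7)] sum_sq_gap_le_sqrt[OF finU sym nn, of f]
      unfolding B_def by linarith
    show "dirichlet_sum w U f \<le> 4 * degree_sqnorm w U f"
      by (rule dirichlet_sum_le_degree_sqnorm[OF sym nn])
  qed
  also have "\<dots> = sqrt (8 * rayleigh U w f)"
    by (simp add: rayleigh_eq_dirichlet_sum[OF finU sym nn])
  finally show ?thesis .
qed

end
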